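(* Fix a complex number $q$ with $0<|q|<1$ and an integer $k\ge0$, and let $\tilde\sigma_{-k-1}(x)=\frac{(-1)^kq^{\binom{k+1}{2}}}{(x;q)_{k+1}(qx^{-1};q)_k}$. Then the meromorphic differential $\tilde\sigma_{-k-1}(x)\,dx$ on $\mathbb{CP}^1$ has simple poles at $x=q^j$ for $j=0,\pm1,\dots,\pm k$, with \[ \operatorname{Res}_{x=q^j}\tilde\sigma_{-k-1}\,dx=-\frac{(-1)^{k+j}q^{\binom{j+1}{2}+\binom{k+1}{2}}}{(q;q)_{k-j}\,(q;q)_{k+j}}, \] where $\binom{j+1}{2}=\frac{j(j+1)}{2}$ also for negative $j$. Additionally, $\tilde\sigma_{-1}(x)\,dx$ has a simple pole at $x=\infty$ with $\operatorname{Res}_{x=\infty}\tilde\sigma_{-1}\,dx=1$.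
   Context: $(a;q)_n=\prod_{j=0}^{n-1}(1-aq^j)$ denotes the $q$-Pochhammer symbol. *)

theory Defs
  imports "HOL-Complex_Analysis.Complex_Analysis"
begin

definition qpoch :: "complex \<Rightarrow> complex \<Rightarrow> nat \<Rightarrow> complex" where
  "qpoch a q n = (\<Prod>j<n. (1 - a * q ^ j))"

definition sigma_tilde :: "complex \<Rightarrow> nat \<Rightarrow> complex \<Rightarrow> complex" where
  "sigma_tilde q k x = ((-1) ^ k * q ^ (k * (k + 1) div 2)) /
       (qpoch x q (k + 1) * qpoch (q / x) q k)"

text \<open>Local expression at w = 0 of the differential f(x) dx in the chart x = 1/w
  around the point infinity: f(1/w) d(1/w) = - f(1/w) / w^2 dw.\<close>
definition diff_at_infinity :: "(complex \<Rightarrow> complex) \<Rightarrow> complex \<Rightarrow> complex" where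
  "diff_at_infinity f w = - f (inverse w) / w ^ 2"

end

theory Submission
  imports Defs
begin

text \<open>Multiplying numerator and denominator by x^k gives
  sigma_{-k-1}(x) = -x^k / \<Prod>_{m=-k..k} (x - q^m), because
  x^k (x;q)_{k+1} (q/x;q)_k = (-1)^{k+1} q^{k(k+1)/2} \<Prod>_{m=-k..k} (x - q^m).
  The 2k+1 points q^m are distinct since 0 < |q| < 1, so each is a simple pole, with residue
  -q^{jk} / \<Prod>_{m \<noteq> j} (q^j - q^m).  The factors with m > j contribute q^{j(k-j)} (q;q)_{k-j},
  those with m < j contribute (-1)^{k+j} q^{(k+j)j - binom(k+j+1,2)} (q;q)_{k+j}, and
  binom(k+j+1,2) = binom(j+1,2) + binom(k+1,2) + jk turns the total power of q into the claimed one.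
  For k = 0 we have sigma_{-1}(x) = 1/(1-x), which in the chart w = 1/x at infinity becomes
  dw / (w (1-w)).\<close>

lemma simple_pole_eventually_eq:
  fixes f g :: "complex \<Rightarrow> complex"
  assumes "open S" "c \<in> S" "g holomorphic_on S" "g c \<noteq> 0"
    and ev: "eventually (\<lambda>w. f w = g w / (w - c)) (at c)"
  shows "is_pole f c \<and> zorder f c = -1 \<and> residue f c = g c"
proof -
  have "is_pole (\<lambda>w. g w / (w - c) ^ 1) c"
    by (rule is_pole_basic) (use assms in auto)
  moreover have "zorder (\<lambda>w. g w / (w - c)) c = -1"
    by (rule zorder_eqI[OF assms(1-4)]) (simp add: power_int_minus divide_inverse)
  moreover have "residue (\<lambda>w. g w / (w - c)) c = g c"
    by (rule residue_simple[OF assms(1-3)])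
  ultimately show ?thesis
    using is_pole_cong[OF ev refl] zorder_cong[OF ev refl] residue_cong[OF ev refl] by simp
qed

lemma simple_pole_div_prod:
  fixes f h :: "complex \<Rightarrow> complex" and r :: "'a \<Rightarrow> complex"
  assumes "finite I" "inj_on r I" "i \<in> I" "h holomorphic_on UNIV" "h (r i) \<noteq> 0"
    and ev: "eventually (\<lambda>x. f x = h x / (\<Prod>l\<in>I. x - r l)) (at (r i))"
  shows "is_pole f (r i) \<and> zorder f (r i) = -1 \<and>
    residue f (r i) = h (r i) / (\<Prod>l\<in>I - {i}. r i - r l)"
proof (rule simple_pole_eventually_eq)
  define S where "S = - r ` (I - {i})"
  show "open S"
    unfolding S_def using assms(1) by (intro open_Compl finite_imp_closed) simp
  show "r i \<in> S"
    unfolding S_def using assms(2,3) by (auto simp: inj_on_def)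
  have nonzero: "(\<Prod>l\<in>I - {i}. x - r l) \<noteq> 0" if "x \<in> S" for x
    using that assms(1) unfolding S_def by auto
  then show "(\<lambda>x. h x / (\<Prod>l\<in>I - {i}. x - r l)) holomorphic_on S"
    using assms(4) by (intro holomorphic_intros) auto
  show "h (r i) / (\<Prod>l\<in>I - {i}. r i - r l) \<noteq> 0"
    using nonzero[OF \<open>r i \<in> S\<close>] assms(5) by simp
  have "(\<Prod>l\<in>I. x - r l) = (x - r i) * (\<Prod>l\<in>I - {i}. x - r l)" for x
    using assms(1,3) by (rule prod.remove)
  then show "eventually (\<lambda>x. f x = h x / (\<Prod>l\<in>I - {i}. x - r l) / (x - r i)) (at (r i))"
    using ev by (simp add: ac_simps)
qed

lemma triangular_Suc: "Suc n * (Suc n + 1) div 2 = n * (n + 1) div 2 + Suc n"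
proof -
  have "Suc n * (Suc n + 1) = n * (n + 1) + 2 * Suc n" by simp
  then show ?thesis by simp
qed

lemma triangular_int_add:
  fixes a b :: int
  shows "(a + b) * (a + b + 1) div 2 = a * (a + 1) div 2 + b * (b + 1) div 2 + a * b"
proof -
  obtain u v where "a * (a + 1) = 2 * u" "b * (b + 1) = 2 * v"
    by (metis dvd_def even_mult_iff even_plus_one_iff)
  moreover have "(a + b) * (a + b + 1) = a * (a + 1) + b * (b + 1) + 2 * (a * b)"
    by (simp add: algebra_simps)
  ultimately show ?thesis by simp
qed

lemma qpoch_Suc: "qpoch a q (Suc n) = qpoch a q n * (1 - a * q ^ n)"
  by (simp add: qpoch_def)

lemma qpoch_nonzero:
  fixes a q :: complex
  assumes "norm a < 1" "norm q \<le> 1"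
  shows "qpoch a q n \<noteq> 0"
proof -
  have "norm (a * q ^ t) \<le> norm a" for t
    using assms by (simp add: norm_mult norm_power mult_left_le power_le_one)
  then have "a * q ^ t \<noteq> 1" for t
    using assms(1) by (metis norm_one not_le)
  then show ?thesis
    unfolding qpoch_def by simp
qed

lemma inj_power_int:
  fixes q :: complex
  assumes "0 < norm q" "norm q < 1"
  shows "inj (power_int q)"
proof (rule injI)
  fix m n assume "q powi m = q powi n"
  then have "norm q powi m = norm q powi n"
    by (simp flip: norm_power_int)
  then show "m = n"
    using power_int_strict_decreasing[of m n "norm q"] power_int_strict_decreasing[of n m "norm q"]
      assms by (cases m n rule: linorder_cases) auto
qed

lemma prod_qpowers_above:
  fixes q :: complex and j :: int
  assumes "q \<noteq> 0"
  shows "(\<Prod>m\<in>{j<..j + int n}. q powi j - q powi m) = q powi (j * int n) * qpoch q q n"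
proof (induction n)
  case 0
  then show ?case by (simp add: qpoch_def)
next
  case (Suc n)
  have "{j<..j + int (Suc n)} = insert (j + int (Suc n)) {j<..j + int n}" by auto
  moreover have "q powi j - q powi (j + int (Suc n)) = q powi j * (1 - q * q ^ n)"
    using assms by (simp add: power_int_add algebra_simps)
  ultimately show ?case
    using Suc assms by (simp add: qpoch_Suc power_int_add algebra_simps)
qed

lemma prod_qpowers_below:
  fixes q :: complex and j :: int
  assumes "q \<noteq> 0"
  shows "(\<Prod>m\<in>{j - int n..<j}. q powi j - q powi m) =
    (-1) ^ n * q powi (int n * j - int (n * (n + 1) div 2)) * qpoch q q n"
proof (induction n)
  case 0
  then show ?case by (simp add: qpoch_def)
next
  case (Suc n)
  have "{j - int (Suc n)..<j} = insert (j - int (Suc n)) {j - int n..<j}" by auto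
  then have "(\<Prod>m\<in>{j - int (Suc n)..<j}. q powi j - q powi m) =
      (q powi j - q powi (j - int (Suc n))) * (\<Prod>m\<in>{j - int n..<j}. q powi j - q powi m)"
    by simp
  also have "q powi j - q powi (j - int (Suc n)) = - (q powi (j - int (Suc n))) * (1 - q * q ^ n)"
  proof -
    have "q powi j = q powi (j - int (Suc n)) * q ^ Suc n"
      using assms by (simp flip: power_int_add power_int_of_nat)
    then show ?thesis by (simp add: algebra_simps)
  qed
  also have "(- (q powi (j - int (Suc n))) * (1 - q * q ^ n)) *
      (\<Prod>m\<in>{j - int n..<j}. q powi j - q powi m) =
      (-1) ^ Suc n * (q powi (int n * j - int (n * (n + 1) div 2)) * q powi (j - int (Suc n)))
        * qpoch q q (Suc n)"
    by (simp add: Suc qpoch_Suc)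
  also have "q powi (int n * j - int (n * (n + 1) div 2)) * q powi (j - int (Suc n)) =
      q powi (int (Suc n) * j - int (Suc n * (Suc n + 1) div 2))"
    unfolding triangular_Suc using assms by (simp add: algebra_simps flip: power_int_add)
  finally show ?case .
qed

lemma prod_qpowers_punctured:
  fixes q :: complex and j :: int
  assumes "q \<noteq> 0" "- int k \<le> j" "j \<le> int k"
  shows "(\<Prod>m\<in>{-int k..int k} - {j}. q powi j - q powi m) =
    (-1) powi (int k + j) * q powi (j * int k - (j * (j + 1) div 2 + int (k * (k + 1) div 2)))
      * qpoch q q (nat (int k - j)) * qpoch q q (nat (int k + j))"
proof -
  define a b where "a = nat (int k + j)" and "b = nat (int k - j)"
  have a: "int a = int k + j" and b: "int b = int k - j"
    using assms unfolding a_def b_def by auto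
  have "int (a * (a + 1) div 2) = int a * (int a + 1) div 2"
    by (simp only: zdiv_int of_nat_mult of_nat_add of_nat_1 of_nat_numeral)
  also have "\<dots> = int k * (int k + 1) div 2 + j * (j + 1) div 2 + int k * j"
    unfolding a by (rule triangular_int_add)
  finally have Ta:
    "int (a * (a + 1) div 2) = int k * (int k + 1) div 2 + j * (j + 1) div 2 + int k * j" .
  have Tk: "int (k * (k + 1) div 2) = int k * (int k + 1) div 2"
    by (simp only: zdiv_int of_nat_mult of_nat_add of_nat_1 of_nat_numeral)
  have "int a * j - int (a * (a + 1) div 2) + j * int b =
      j * int k - (j * (j + 1) div 2 + int (k * (k + 1) div 2))"
    unfolding Ta Tk a b by (simp add: algebra_simps)
  then have exponent: "q powi (int a * j - int (a * (a + 1) div 2)) * q powi (j * int b) =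
      q powi (j * int k - (j * (j + 1) div 2 + int (k * (k + 1) div 2)))"
    using assms(1) by (simp flip: power_int_add)
  have split: "{-int k..int k} - {j} = {j - int a..<j} \<union> {j<..j + int b}"
    using a b by auto
  have "(\<Prod>m\<in>{-int k..int k} - {j}. q powi j - q powi m) =
      (\<Prod>m\<in>{j - int a..<j}. q powi j - q powi m) * (\<Prod>m\<in>{j<..j + int b}. q powi j - q powi m)"
    unfolding split by (rule prod.union_disjoint) auto
  also have "\<dots> = (-1) ^ a * (q powi (int a * j - int (a * (a + 1) div 2)) * q powi (j * int b))
      * qpoch q q b * qpoch q q a"
    unfolding prod_qpowers_below[OF assms(1)] prod_qpowers_above[OF assms(1)]
    by (simp add: ac_simps)
  also have "\<dots> = (-1) powi (int k + j) *
      q powi (j * int k - (j * (j + 1) div 2 + int (k * (k + 1) div 2))) * qpoch q q b * qpoch q q a"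
    unfolding exponent by (simp flip: a)
  finally show ?thesis
    unfolding a_def b_def .
qed

lemma qpoch_mult_qpoch_div_eq_prod:
  fixes x q :: complex
  assumes "x \<noteq> 0" "q \<noteq> 0"
  shows "qpoch x q (k + 1) * qpoch (q / x) q k * x ^ k =
    (-1) ^ (k + 1) * q ^ (k * (k + 1) div 2) * (\<Prod>m\<in>{-int k..int k}. x - q powi m)"
proof (induction k)
  case 0
  then show ?case by (simp add: qpoch_def)
next
  case (Suc k)
  have "q powi (- int (Suc k)) = inverse (q ^ Suc k)"
    by (simp only: power_int_minus power_int_of_nat)
  then have left: "1 - x * q ^ Suc k = - (q ^ Suc k) * (x - q powi (- int (Suc k)))"
    using assms by (simp add: field_simps)
  have right: "(1 - q / x * q ^ k) * x = x - q powi int (Suc k)"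
    using assms by (simp only: power_int_of_nat) (simp add: field_simps)
  have "{-int (Suc k)..int (Suc k)} = insert (- int (Suc k)) (insert (int (Suc k)) {-int k..int k})"
    by auto
  then have prod: "(\<Prod>m\<in>{-int (Suc k)..int (Suc k)}. x - q powi m) =
      (x - q powi (- int (Suc k))) * (x - q powi int (Suc k)) * (\<Prod>m\<in>{-int k..int k}. x - q powi m)"
    by simp
  have "qpoch x q (Suc k + 1) * qpoch (q / x) q (Suc k) * x ^ Suc k =
      (qpoch x q (k + 1) * qpoch (q / x) q k * x ^ k) * (1 - x * q ^ Suc k) * ((1 - q / x * q ^ k) * x)"
    by (simp add: qpoch_Suc mult_ac)
  also have "\<dots> = (-1) ^ (Suc k + 1) * q ^ (Suc k * (Suc k + 1) div 2) *
      (\<Prod>m\<in>{-int (Suc k)..int (Suc k)}. x - q powi m)"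
    unfolding Suc left right prod triangular_Suc power_add by (simp add: ac_simps)
  finally show ?case .
qed

lemma sigma_tilde_eq_div_prod:
  fixes x q :: complex
  assumes "x \<noteq> 0" "q \<noteq> 0"
  shows "sigma_tilde q k x = - (x ^ k) / (\<Prod>m\<in>{-int k..int k}. x - q powi m)"
proof -
  define D where "D = qpoch x q (k + 1) * qpoch (q / x) q k"
  define P where "P = (\<Prod>m\<in>{-int k..int k}. x - q powi m)"
  have DP: "D * x ^ k = (-1) ^ (k + 1) * q ^ (k * (k + 1) div 2) * P"
    unfolding D_def P_def by (rule qpoch_mult_qpoch_div_eq_prod[OF assms])
  have "(-1) ^ k * q ^ (k * (k + 1) div 2) / D = - (x ^ k) / P"
  proof (cases "P = 0")
    case True
    then show ?thesis using DP assms by simp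
  next
    case False
    then have "D \<noteq> 0" using DP assms by auto
    then show ?thesis using DP False by (simp add: field_simps)
  qed
  then show ?thesis
    unfolding sigma_tilde_def D_def P_def .
qed

lemma sigma_tilde_simple_pole_at_qpower:
  fixes q :: complex and j :: int
  assumes q: "0 < norm q" "norm q < 1" and j: "- int k \<le> j" "j \<le> int k"
  shows "is_pole (sigma_tilde q k) (q powi j) \<and> zorder (sigma_tilde q k) (q powi j) = -1 \<and>
    residue (sigma_tilde q k) (q powi j) =
      - ((-1) powi (int k + j) * q powi (j * (j + 1) div 2 + int (k * (k + 1) div 2)))
        / (qpoch q q (nat (int k - j)) * qpoch q q (nat (int k + j)))"
proof -
  have "q \<noteq> 0" using q by auto
  have "eventually (\<lambda>x. sigma_tilde q k x = - (x ^ k) / (\<Prod>m\<in>{-int k..int k}. x - q powi m))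
      (at (q powi j))"
    using eventually_neq_at_within[of 0]
    by eventually_elim (simp add: sigma_tilde_eq_div_prod \<open>q \<noteq> 0\<close>)
  then have "is_pole (sigma_tilde q k) (q powi j) \<and> zorder (sigma_tilde q k) (q powi j) = -1 \<and>
      residue (sigma_tilde q k) (q powi j) =
        - ((q powi j) ^ k) / (\<Prod>m\<in>{-int k..int k} - {j}. q powi j - q powi m)"
    using inj_power_int[OF q] j \<open>q \<noteq> 0\<close>
    by (intro simple_pole_div_prod) (auto intro: inj_on_subset intro!: holomorphic_intros)
  moreover have "- ((q powi j) ^ k) / (\<Prod>m\<in>{-int k..int k} - {j}. q powi j - q powi m) =
      - ((-1) powi (int k + j) * q powi (j * (j + 1) div 2 + int (k * (k + 1) div 2)))
        / (qpoch q q (nat (int k - j)) * qpoch q q (nat (int k + j)))"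
  proof -
    have "(-1) powi (int k + j) * (-1) powi (int k + j) = (1 :: complex)"
      by (simp flip: power_int_mult_distrib)
    then show ?thesis
      unfolding prod_qpowers_punctured[OF \<open>q \<noteq> 0\<close> j]
      using \<open>q \<noteq> 0\<close> qpoch_nonzero[of q q] q
      by (simp add: power_int_diff power_int_mult field_simps)
  qed
  ultimately show ?thesis by simp
qed

lemma sigma_tilde_0_simple_pole_at_infinity:
  "is_pole (diff_at_infinity (sigma_tilde q 0)) 0 \<and>
    zorder (diff_at_infinity (sigma_tilde q 0)) 0 = -1 \<and>
    residue (diff_at_infinity (sigma_tilde q 0)) 0 = 1"
proof -
  have "eventually (\<lambda>w. diff_at_infinity (sigma_tilde q 0) w = 1 / (1 - w) / (w - 0)) (at 0)"
    using eventually_neq_at_within[of 0] eventually_neq_at_within[of 1]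
    by eventually_elim
      (simp add: diff_at_infinity_def sigma_tilde_def qpoch_def field_simps power2_eq_square)
  then have "is_pole (diff_at_infinity (sigma_tilde q 0)) 0 \<and>
      zorder (diff_at_infinity (sigma_tilde q 0)) 0 = -1 \<and>
      residue (diff_at_infinity (sigma_tilde q 0)) 0 = 1 / (1 - 0)"
    by (intro simple_pole_eventually_eq[where S = "- {1}"]) (auto intro!: holomorphic_intros)
  then show ?thesis by simp
qed

theorem lemma5p1:
  fixes q :: complex and k :: nat
  assumes "0 < norm q" and "norm q < 1"
  shows "(\<forall>j::int. - int k \<le> j \<and> j \<le> int k \<longrightarrow>
            is_pole (sigma_tilde q k) (q powi j) \<and>
            zorder (sigma_tilde q k) (q powi j) = -1 \<and>
            residue (sigma_tilde q k) (q powi j) =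
              - ((-1) powi (int k + j) * q powi (j * (j + 1) div 2 + int (k * (k + 1) div 2)))
                / (qpoch q q (nat (int k - j)) * qpoch q q (nat (int k + j))))
         \<and> is_pole (diff_at_infinity (sigma_tilde q 0)) 0
         \<and> zorder (diff_at_infinity (sigma_tilde q 0)) 0 = -1
         \<and> residue (diff_at_infinity (sigma_tilde q 0)) 0 = 1"
  using sigma_tilde_simple_pole_at_qpower[OF assms] sigma_tilde_0_simple_pole_at_infinity by blast

end
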